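(* Let $\vec G=(V,E,\omega)$ be a weighted directed Eulerian graph with positive in-degrees $\deg^-(v)$, and for $S\subseteq V$ let $\Psi(S)=\sum_{v\in S}\sum_{(u,v)\in E,\,u\in S}\frac{\omega((u,v))}{\deg^-(v)}$. If $S\neq\emptyset$ satisfies $\Psi(S)/|S|\le\frac12$, then there is a subset $S'\subseteq S$ with $|S'|\ge\frac14|S|$ such that every $s\in S'$ satisfies $$\sum_{(v,s)\in E,\,v\notin S}\omega((v,s))\ge\frac14\deg^-(s).$$
   Context: $\deg^-(v)$ denotes the weighted in-degree of $v$ in $\vec G$; Eulerian means in-degree equals out-degree at every vertex. *)

theory Defs
  imports Complex_Main
begin

definition wdigraph :: "'a set \<Rightarrow> ('a \<times> 'a) set \<Rightarrow> ('a \<times> 'a \<Rightarrow> real) \<Rightarrow> bool" where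
  "wdigraph V E w \<longleftrightarrow> finite V \<and> E \<subseteq> V \<times> V \<and> (\<forall>e\<in>E. w e > 0)"

definition in_deg :: "('a \<times> 'a) set \<Rightarrow> ('a \<times> 'a \<Rightarrow> real) \<Rightarrow> 'a \<Rightarrow> real" where
  "in_deg E w v = (\<Sum>e\<in>{e\<in>E. snd e = v}. w e)"

definition out_deg :: "('a \<times> 'a) set \<Rightarrow> ('a \<times> 'a \<Rightarrow> real) \<Rightarrow> 'a \<Rightarrow> real" where
  "out_deg E w v = (\<Sum>e\<in>{e\<in>E. fst e = v}. w e)"

definition eulerian :: "'a set \<Rightarrow> ('a \<times> 'a) set \<Rightarrow> ('a \<times> 'a \<Rightarrow> real) \<Rightarrow> bool" where
  "eulerian V E w \<longleftrightarrow> (\<forall>v\<in>V. in_deg E w v = out_deg E w v)"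

definition Psi :: "('a \<times> 'a) set \<Rightarrow> ('a \<times> 'a \<Rightarrow> real) \<Rightarrow> 'a set \<Rightarrow> real" where
  "Psi E w S = (\<Sum>v\<in>S. \<Sum>u\<in>{u\<in>S. (u, v) \<in> E}. w (u, v) / in_deg E w v)"

end

theory Submission
  imports Defs
begin

text \<open>Write \<open>\<Psi>(S) = \<Sum>\<^sub>s f(s)\<close> where \<open>f(s)\<close> is the fraction of the in-degree of \<open>s\<close>
  coming from inside \<open>S\<close>. Since \<open>f \<ge> 0\<close> and its average over \<open>S\<close> is at most \<open>1/2\<close>,
  Markov's inequality shows that \<open>f(s) > 3/4\<close> on at most \<open>2/3\<close> of \<open>S\<close>; every other
  \<open>s \<in> S\<close> receives at least a quarter of its in-degree from outside \<open>S\<close>.\<close>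

definition in_deg_from :: "('a \<times> 'a) set \<Rightarrow> ('a \<times> 'a \<Rightarrow> real) \<Rightarrow> 'a set \<Rightarrow> 'a \<Rightarrow> real" where
  "in_deg_from E w A v = (\<Sum>e\<in>{e\<in>E. snd e = v \<and> fst e \<in> A}. w e)"

lemma in_deg_from_nonneg:
  assumes "\<forall>e\<in>E. w e > 0"
  shows "in_deg_from E w A v \<ge> 0"
  unfolding in_deg_from_def using assms by (intro sum_nonneg) auto

lemma in_deg_eq_in_deg_from_add_Compl:
  assumes "finite E"
  shows "in_deg E w v = in_deg_from E w A v + in_deg_from E w (- A) v"
proof -
  have "{e\<in>E. snd e = v} = {e\<in>E. snd e = v \<and> fst e \<in> A} \<union> {e\<in>E. snd e = v \<and> fst e \<in> - A}"
    by auto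
  then show ?thesis
    unfolding in_deg_def in_deg_from_def using assms by (auto intro: sum.union_disjoint)
qed

lemma in_deg_from_eq_sum_in_neighbours:
  "in_deg_from E w A v = (\<Sum>u\<in>{u\<in>A. (u, v) \<in> E}. w (u, v))"
  unfolding in_deg_from_def
proof (rule sum.reindex_cong[where l = "\<lambda>u. (u, v)"])
  show "{e\<in>E. snd e = v \<and> fst e \<in> A} = (\<lambda>u. (u, v)) ` {u\<in>A. (u, v) \<in> E}" by force
qed (auto simp: inj_on_def)

lemma Psi_eq_sum_in_deg_from:
  "Psi E w S = (\<Sum>v\<in>S. in_deg_from E w S v / in_deg E w v)"
  unfolding Psi_def in_deg_from_eq_sum_in_neighbours by (simp add: sum_divide_distrib)

lemma card_gt_mult_le_sum:
  fixes f :: "'a \<Rightarrow> real"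
  assumes "finite S" and "\<forall>s\<in>S. f s \<ge> 0"
  shows "real (card {s\<in>S. f s > t}) * t \<le> sum f S"
proof -
  have "real (card {s\<in>S. f s > t}) * t = (\<Sum>s\<in>{s\<in>S. f s > t}. t)" by simp
  also have "\<dots> \<le> (\<Sum>s\<in>{s\<in>S. f s > t}. f s)" by (intro sum_mono) auto
  also have "\<dots> \<le> sum f S" using assms by (intro sum_mono2) auto
  finally show ?thesis .
qed

theorem lemmaC3:
  fixes V :: "'a set" and E :: "('a \<times> 'a) set" and w :: "'a \<times> 'a \<Rightarrow> real"
    and S :: "'a set"
  assumes "wdigraph V E w"
    and "eulerian V E w"
    and "\<forall>v\<in>V. in_deg E w v > 0"
    and "S \<subseteq> V" and "S \<noteq> {}"
    and "Psi E w S / real (card S) \<le> 1 / 2"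
  shows "\<exists>S'\<subseteq>S. real (card S') \<ge> real (card S) / 4 \<and>
           (\<forall>s\<in>S'. (\<Sum>e\<in>{e\<in>E. snd e = s \<and> fst e \<notin> S}. w e) \<ge> in_deg E w s / 4)"
proof -
  have fin_V: "finite V" and E_V: "E \<subseteq> V \<times> V" and w_pos: "\<forall>e\<in>E. w e > 0"
    using assms(1) unfolding wdigraph_def by auto
  have fin_E: "finite E" and fin_S: "finite S"
    using fin_V E_V assms(4) finite_subset by (blast, blast)
  define f where "f s = in_deg_from E w S s / in_deg E w s" for s
  define T where "T = {s\<in>S. f s > 3/4}"
  have "\<forall>s\<in>S. f s \<ge> 0"
    using assms(3,4) in_deg_from_nonneg[OF w_pos] by (auto simp: f_def less_imp_le)
  then have "real (card T) * (3/4) \<le> sum f S"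
    unfolding T_def using fin_S by (intro card_gt_mult_le_sum)
  also have "\<dots> \<le> real (card S) / 2"
    using assms(5,6) fin_S by (simp add: f_def Psi_eq_sum_in_deg_from divide_le_eq card_gt_0_iff)
  finally have "real (card (S - T)) \<ge> real (card S) / 4"
    using fin_S card_Diff_subset[of T S] card_mono[of S T] by (auto simp: T_def of_nat_diff)
  moreover have "in_deg_from E w (- S) s \<ge> in_deg E w s / 4" if "s \<in> S - T" for s
  proof -
    have "in_deg E w s > 0" using that assms(3,4) by auto
    moreover have "f s \<le> 3/4" using that by (auto simp: T_def)
    ultimately have "in_deg_from E w S s \<le> 3/4 * in_deg E w s"
      by (simp add: f_def divide_le_eq)
    then show ?thesis using in_deg_eq_in_deg_from_add_Compl[OF fin_E, of w s S] by linarith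
  qed
  ultimately show ?thesis
    by (intro exI[of _ "S - T"]) (auto simp: in_deg_from_def)
qed

end
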